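(* Let $(A^{\mathbb N},\mathbb B_\Pi(A^{\mathbb N}),m,\sigma)$ be a Markov shift over $A=\{0,1,\dots,l\}$, let $\mathcal P=\{P_0,\dots,P_n\}\subset\mathbb B_\Pi(A^{\mathbb N})$ be a partition of $A^{\mathbb N}$, and let $O\in\mathbb B_\Pi(A^{\mathbb N})$ satisfy $m(O)=0$ and $\sigma^{-1}(O)=O$. Put $\widetilde{\mathcal P}=\{P\setminus O\mid P\in\mathcal P\}\cup\{O\}$. If $\widetilde{\mathcal P}$ satisfies: (i) each element of $\widetilde{\mathcal P}$ is either a subset of some cylinder $C_a$, $a\in A$, or is a $\sigma$-invariant set ($\sigma^{-1}(Q)=Q$) of measure $0$; and (ii) for any $Q_1,Q_2\in\widetilde{\mathcal P}$, either $Q_1\cap\sigma^{-1}(Q_2)=C_a\cap\sigma^{-1}(Q_2)$ for some $a\in A$, or $m(Q_1\cap\sigma^{-1}(Q_2))=0$; then $\mathcal P$ is generating and has the Markov property.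
   Context: Markov shift over $A=\{0,\dots,l\}$: given an $(l+1)\times(l+1)$ stochastic matrix $Q=(q_{ij})$ and a stationary probability vector $p$ of $Q$ with all $p_a>0$, it is $(A^{\mathbb N},\mathbb B_\Pi(A^{\mathbb N}),m,\sigma)$ with $A^{\mathbb N}$ the one-sided sequences $s=(s_0,s_1,\dots)$, $\mathbb B_\Pi$ generated by cylinders $C_{a_0\dots a_{n-1}}=\{s: s_i=a_i, i<n\}$, $(\sigma s)_j=s_{j+1}$, and $m(C_{a_0\dots a_{n-1}})=p_{a_0}q_{a_0a_1}\cdots q_{a_{n-2}a_{n-1}}$. A finite measurable partition $\mathcal G=\{G_0,\dots,G_r\}$ is generating if for every measurable $B$ there is $A'$ in the $\sigma$-algebra generated by the sets $\sigma^{-k}(G_i)$, $k\in\mathbb N_0$, with $m(A'\triangle B)=0$. A finite partition $\mathcal M=\{M_0,\dots,M_r\}$ has the Markov property if for all $n\in\mathbb N$ and $i_0,\dots,i_n$ with $m(M_{i_0}\cap\sigma^{-1}M_{i_1}\cap\dots\cap\sigma^{-(n-1)}M_{i_{n-1}})>0$, $\frac{m(M_{i_0}\cap\sigma^{-1}M_{i_1}\cap\dots\cap\sigma^{-n}M_{i_n})}{m(M_{i_0}\cap\dots\cap\sigma^{-(n-1)}M_{i_{n-1}})}=\frac{m(M_{i_{n-1}}\cap\sigma^{-1}M_{i_n})}{m(M_{i_{n-1}})}$. *)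

theory Defs
  imports "HOL-Analysis.Analysis"
begin

definition seq_space :: "nat \<Rightarrow> (nat \<Rightarrow> nat) set" where
  "seq_space l = {s. \<forall>i. s i \<le> l}"

definition cyl :: "nat \<Rightarrow> nat list \<Rightarrow> (nat \<Rightarrow> nat) set" where
  "cyl l as = {s \<in> seq_space l. \<forall>i<length as. s i = as ! i}"

definition words :: "nat \<Rightarrow> nat list set" where
  "words l = {as. \<forall>a\<in>set as. a \<le> l}"

definition shift :: "(nat \<Rightarrow> nat) \<Rightarrow> (nat \<Rightarrow> nat)" where
  "shift s = (\<lambda>j. s (Suc j))"

definition preim :: "nat \<Rightarrow> nat \<Rightarrow> (nat \<Rightarrow> nat) set \<Rightarrow> (nat \<Rightarrow> nat) set" where
  "preim l k B = {s \<in> seq_space l. (shift ^^ k) s \<in> B}"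

definition markov_cyl_weight :: "(nat \<Rightarrow> nat \<Rightarrow> real) \<Rightarrow> (nat \<Rightarrow> real) \<Rightarrow> nat list \<Rightarrow> real" where
  "markov_cyl_weight q p as = p (as ! 0) * (\<Prod>i<length as - 1. q (as ! i) (as ! Suc i))"

definition markov_shift ::
  "nat \<Rightarrow> (nat \<Rightarrow> nat \<Rightarrow> real) \<Rightarrow> (nat \<Rightarrow> real) \<Rightarrow> (nat \<Rightarrow> nat) measure \<Rightarrow> bool" where
  "markov_shift l q p M \<longleftrightarrow>
     (\<forall>i\<le>l. \<forall>j\<le>l. 0 \<le> q i j) \<and>
     (\<forall>i\<le>l. (\<Sum>j\<le>l. q i j) = 1) \<and>
     (\<forall>a\<le>l. 0 < p a) \<and> (\<Sum>a\<le>l. p a) = 1 \<and>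
     (\<forall>j\<le>l. (\<Sum>i\<le>l. p i * q i j) = p j) \<and>
     space M = seq_space l \<and>
     sets M = sigma_sets (seq_space l) (cyl l ` words l) \<and>
     (\<forall>as\<in>words l. as \<noteq> [] \<longrightarrow> emeasure M (cyl l as) = ennreal (markov_cyl_weight q p as))"

definition generating :: "nat \<Rightarrow> (nat \<Rightarrow> nat) measure \<Rightarrow> (nat \<Rightarrow> (nat \<Rightarrow> nat) set) \<Rightarrow> nat \<Rightarrow> bool" where
  "generating l M G r \<longleftrightarrow>
     (\<forall>B\<in>sets M. \<exists>A'\<in>sigma_sets (seq_space l) {preim l k (G i) | k i. i \<le> r}.
        measure M ((A' - B) \<union> (B - A')) = 0)"

definition cyl_partition :: "nat \<Rightarrow> (nat \<Rightarrow> (nat \<Rightarrow> nat) set) \<Rightarrow> (nat \<Rightarrow> nat) \<Rightarrow> nat \<Rightarrow> (nat \<Rightarrow> nat) set" where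
  "cyl_partition l P idx k = (\<Inter>j<k. preim l j (P (idx j)))"

definition markov_property :: "nat \<Rightarrow> (nat \<Rightarrow> nat) measure \<Rightarrow> (nat \<Rightarrow> (nat \<Rightarrow> nat) set) \<Rightarrow> nat \<Rightarrow> bool" where
  "markov_property l M P r \<longleftrightarrow>
     (\<forall>n\<ge>1. \<forall>idx. (\<forall>j\<le>n. idx j \<le> r) \<longrightarrow>
        measure M (cyl_partition l P idx n) > 0 \<longrightarrow>
        measure M (cyl_partition l P idx (Suc n)) / measure M (cyl_partition l P idx n)
        = measure M (P (idx (n - 1)) \<inter> preim l 1 (P (idx n))) / measure M (P (idx (n - 1))))"

end

theory Submission
  imports Defs
begin

text \<open>
  Write \<open>C\<^sub>w\<close> for the cylinder of a word \<open>w\<close> and \<open>\<sigma>\<^sup>-\<^sup>k\<close> for the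
  preimage under the \<open>k\<close>-th iterate of the shift.  Modulo the null set \<open>O\<close>,
  conditions (i) and (ii) say that every partition element lies a.e. inside a
  one-letter cylinder, and that every two-step transition \<open>P\<^sub>i \<inter> \<sigma>\<^sup>-\<^sup>1 P\<^sub>j\<close>
  is either null or a.e. equal to \<open>C\<^sub>a \<inter> \<sigma>\<^sup>-\<^sup>1 P\<^sub>j\<close>.  By induction on the length,
  every atom \<open>P\<^sub>i\<^sub>0 \<inter> \<dots> \<inter> \<sigma>\<^sup>-\<^sup>k P\<^sub>i\<^sub>k\<close> of the refined partition is then either null
  or a.e. equal to \<open>C\<^sub>w \<inter> \<sigma>\<^sup>-\<^sup>k P\<^sub>i\<^sub>k\<close> for a word \<open>w\<close> of length \<open>k\<close>.

  Combined with the atom description, this identity yields the Markov property,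
  while the a.e. description of the one-letter cylinders by the partition
  yields that the partition generates.
\<close>

section \<open>Words, cylinders and shift preimages\<close>

fun qprod :: "(nat \<Rightarrow> nat \<Rightarrow> real) \<Rightarrow> nat \<Rightarrow> nat list \<Rightarrow> real" where
  "qprod q a [] = 1"
| "qprod q a (c # v) = q a c * qprod q c v"

lemma prod_eq_qprod: "(\<Prod>i<length v. q ((a # v) ! i) ((a # v) ! Suc i)) = qprod q a v"
proof (induction v arbitrary: a)
  case Nil then show ?case by simp
next
  case (Cons c v)
  have "(\<Prod>i<length (c # v). q ((a # c # v) ! i) ((a # c # v) ! Suc i)) =
        q a c * (\<Prod>i<length v. q ((a # c # v) ! Suc i) ((a # c # v) ! Suc (Suc i)))"
    by (simp only: length_Cons prod.lessThan_Suc_shift) simp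
  also have "\<dots> = q a c * qprod q c v" using Cons by simp
  finally show ?case by simp
qed

lemma weight_Cons: "markov_cyl_weight q p (a # v) = p a * qprod q a v"
  unfolding markov_cyl_weight_def using prod_eq_qprod[of q a v] by simp

lemma qprod_append: "qprod q a (v @ u) = qprod q a v * qprod q (last (a # v)) u"
  by (induction v arbitrary: a) auto

lemma weight_snoc_append:
  "markov_cyl_weight q p (u @ b # v) = markov_cyl_weight q p (u @ [b]) * qprod q b v"
  by (cases u) (simp_all add: weight_Cons qprod_append)

lemma qprod_nonneg:
  "(\<forall>i\<le>l. \<forall>j\<le>l. 0 \<le> q i j) \<Longrightarrow> a \<le> l \<Longrightarrow> v \<in> words l \<Longrightarrow> 0 \<le> qprod q a v"
  by (induction v arbitrary: a) (auto simp: words_def)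

lemma funpow_shift: "(shift ^^ k) s = (\<lambda>j. s (j + k))"
  by (induction k) (auto simp: shift_def)

lemma shift_seq_space: "s \<in> seq_space l \<Longrightarrow> (\<lambda>j. s (j + k)) \<in> seq_space l"
  by (auto simp: seq_space_def)

lemma preim_alt: "preim l k B = {s \<in> seq_space l. (\<lambda>j. s (j + k)) \<in> B}"
  by (simp add: preim_def funpow_shift)

lemma cyl_subset: "cyl l u \<subseteq> seq_space l" by (auto simp: cyl_def)
lemma preim_subset: "preim l k B \<subseteq> seq_space l" by (auto simp: preim_def)
lemma cyl_Nil: "cyl l [] = seq_space l" by (auto simp: cyl_def)

lemma preim_Int: "preim l k A \<inter> preim l k B = preim l k (A \<inter> B)"
  by (auto simp: preim_def)
lemma preim_empty: "preim l k {} = {}" by (auto simp: preim_def)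
lemma preim_0: "preim l 0 B = seq_space l \<inter> B" by (auto simp: preim_def)
lemma preim_seq_space: "preim l k (seq_space l) = seq_space l"
  using shift_seq_space by (auto simp: preim_alt)
lemma preim_diff: "preim l k (seq_space l - B) = seq_space l - preim l k B"
  using shift_seq_space by (auto simp: preim_alt)
lemma preim_UN: "preim l k (\<Union>i\<in>I. A i) = (\<Union>i\<in>I. preim l k (A i))"
  by (auto simp: preim_def)
lemma preim_preim: "preim l j (preim l k B) = preim l (k + j) B"
  using shift_seq_space by (auto simp: preim_alt add.assoc)

lemma cyl_preim_append: "cyl l u \<inter> preim l (length u) (cyl l v) = cyl l (u @ v)"
proof (intro set_eqI iffI)
  fix s assume s: "s \<in> cyl l u \<inter> preim l (length u) (cyl l v)"
  show "s \<in> cyl l (u @ v)"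
    unfolding cyl_def
  proof (intro CollectI conjI allI impI)
    show "s \<in> seq_space l" using s by (auto simp: cyl_def)
    fix i assume i: "i < length (u @ v)"
    show "s i = (u @ v) ! i"
    proof (cases "i < length u")
      case True then show ?thesis using s by (auto simp: cyl_def nth_append)
    next
      case False
      then obtain j where "i = j + length u" by (metis add.commute le_add_diff_inverse not_less)
      then show ?thesis using s i by (auto simp: cyl_def preim_alt nth_append)
    qed
  qed
next
  fix s assume s: "s \<in> cyl l (u @ v)"
  then have ss: "s \<in> seq_space l" by (auto simp: cyl_def)
  have "s \<in> cyl l u" using s unfolding cyl_def by (auto simp: nth_append)
  moreover have "\<forall>i<length v. s (i + length u) = v ! i"
  proof (intro allI impI)
    fix i assume "i < length v"
    then have "s (length u + i) = (u @ v) ! (length u + i)" using s by (auto simp: cyl_def)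
    then show "s (i + length u) = v ! i" by (simp add: add.commute nth_append)
  qed
  ultimately show "s \<in> cyl l u \<inter> preim l (length u) (cyl l v)"
    using ss shift_seq_space[OF ss] by (auto simp: preim_alt cyl_def)
qed

lemma cyl_eq_INT_preim:
  assumes "w \<noteq> []"
  shows "cyl l w = (\<Inter>j<length w. preim l j (cyl l [w ! j]))"
proof (intro set_eqI iffI)
  fix s assume "s \<in> cyl l w"
  then show "s \<in> (\<Inter>j<length w. preim l j (cyl l [w ! j]))"
    using shift_seq_space by (auto simp: cyl_def preim_alt)
next
  fix s assume s: "s \<in> (\<Inter>j<length w. preim l j (cyl l [w ! j]))"
  then have "s \<in> seq_space l" using assms by (auto simp: preim_alt)
  then show "s \<in> cyl l w" using s by (auto simp: cyl_def preim_alt)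
qed

lemma cyl_single_Int_Cons: "cyl l [b] \<inter> cyl l (c # v) = (if b = c then cyl l (c # v) else {})"
  by (auto simp: cyl_def)

lemma cyl_disjoint: "length u = length v \<Longrightarrow> u \<noteq> v \<Longrightarrow> cyl l u \<inter> cyl l v = {}"
  by (auto simp: cyl_def) (metis nth_equalityI)

lemma cyl_Int: "cyl l u \<inter> cyl l v \<in> {{}, cyl l u, cyl l v}"
proof (cases "\<forall>i<min (length u) (length v). u ! i = v ! i")
  case True
  then have "cyl l u \<inter> cyl l v = (if length u \<le> length v then cyl l v else cyl l u)"
    by (auto simp: cyl_def min_def)
  then show ?thesis by auto
next
  case False
  then have "cyl l u \<inter> cyl l v = {}" by (auto simp: cyl_def)
  then show ?thesis by auto
qed

lemma finite_words_length: "finite {u \<in> words l. length u = k}"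
proof -
  have "{u \<in> words l. length u = k} = {xs. set xs \<subseteq> {..l} \<and> length xs = k}"
    by (auto simp: words_def)
  then show ?thesis using finite_lists_length_eq[of "{..l}" k] by simp
qed

lemma seq_space_UN_cyl: "seq_space l = (\<Union>u\<in>{u \<in> words l. length u = k}. cyl l u)"
proof (intro set_eqI iffI)
  fix s assume s: "s \<in> seq_space l"
  have "map s [0..<k] \<in> {u \<in> words l. length u = k}" using s by (auto simp: words_def seq_space_def)
  moreover have "s \<in> cyl l (map s [0..<k])" using s by (auto simp: cyl_def)
  ultimately show "s \<in> (\<Union>u\<in>{u \<in> words l. length u = k}. cyl l u)" by blast
qed (auto simp: cyl_def)

lemma seq_space_UN_letter: "seq_space l = (\<Union>b\<le>l. cyl l [b])"
  by (auto simp: cyl_def seq_space_def)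

section \<open>The Markov measure\<close>

locale markov_measure =
  fixes l :: nat and q :: "nat \<Rightarrow> nat \<Rightarrow> real" and p :: "nat \<Rightarrow> real"
    and M :: "(nat \<Rightarrow> nat) measure"
  assumes markov: "markov_shift l q p M"
begin

lemma q_nonneg: "i \<le> l \<Longrightarrow> j \<le> l \<Longrightarrow> 0 \<le> q i j" using markov by (auto simp: markov_shift_def)
lemma p_pos: "a \<le> l \<Longrightarrow> 0 < p a" using markov by (auto simp: markov_shift_def)
lemma p_sum: "(\<Sum>a\<le>l. p a) = 1" using markov by (auto simp: markov_shift_def)
lemma p_stationary: "j \<le> l \<Longrightarrow> (\<Sum>i\<le>l. p i * q i j) = p j"
  using markov by (auto simp: markov_shift_def)
lemma space_M: "space M = seq_space l" using markov by (auto simp: markov_shift_def)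
lemma sets_M: "sets M = sigma_sets (seq_space l) (cyl l ` words l)"
  using markov by (auto simp: markov_shift_def)
lemma emeasure_cyl:
  "u \<in> words l \<Longrightarrow> u \<noteq> [] \<Longrightarrow> emeasure M (cyl l u) = ennreal (markov_cyl_weight q p u)"
  using markov by (auto simp: markov_shift_def)
lemma cyl_in_sets: "u \<in> words l \<Longrightarrow> cyl l u \<in> sets M" by (simp add: sets_M)
lemma letter_word: "b \<le> l \<Longrightarrow> [b] \<in> words l" by (simp add: words_def)
lemma seq_space_in_sets: "seq_space l \<in> sets M" by (metis sets.top space_M)

lemma weight_nonneg: "u \<in> words l \<Longrightarrow> u \<noteq> [] \<Longrightarrow> 0 \<le> markov_cyl_weight q p u"
proof (cases u)
  case (Cons a v)
  assume "u \<in> words l"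
  then have "a \<le> l" "v \<in> words l" using Cons by (auto simp: words_def)
  then show ?thesis using Cons p_pos[of a] qprod_nonneg[of l q a v] q_nonneg
    by (simp add: weight_Cons)
qed simp

text \<open>The stationary vector is a probability vector, hence \<open>M\<close> is a probability measure.\<close>
lemma emeasure_space: "emeasure M (space M) = 1"
proof -
  have "emeasure M (space M) = emeasure M (\<Union>b\<in>{..l}. cyl l [b])"
    using space_M seq_space_UN_letter by simp
  also have "\<dots> = (\<Sum>b\<in>{..l}. emeasure M (cyl l [b]))"
    by (rule sum_emeasure[symmetric])
      (auto simp: cyl_in_sets letter_word disjoint_family_on_def cyl_disjoint)
  also have "\<dots> = (\<Sum>b\<in>{..l}. ennreal (p b))"
    by (rule sum.cong) (auto simp: emeasure_cyl letter_word weight_Cons)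
  also have "\<dots> = ennreal (\<Sum>b\<in>{..l}. p b)"
    by (rule sum_ennreal) (auto intro: less_imp_le p_pos)
  finally show ?thesis using p_sum by simp
qed

sublocale finite_measure M by (rule finite_measureI) (simp add: emeasure_space)

lemma measure_cyl: "u \<in> words l \<Longrightarrow> u \<noteq> [] \<Longrightarrow> measure M (cyl l u) = markov_cyl_weight q p u"
  by (simp add: measure_def emeasure_cyl weight_nonneg)

lemma measure_letter: "b \<le> l \<Longrightarrow> measure M (cyl l [b]) = p b"
  by (simp add: measure_cyl letter_word weight_Cons)

lemma AE_not_in_iff_measure_0: "N \<in> sets M \<Longrightarrow> (AE x in M. x \<notin> N) \<longleftrightarrow> measure M N = 0"
  by (simp add: AE_iff_null_sets[symmetric] emeasure_eq_measure null_sets_def)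

text \<open>The shift is measurable: the preimage of a cylinder is a finite union of cylinders.\<close>
lemma preim_in_sets: "B \<in> sets M \<Longrightarrow> preim l k B \<in> sets M"
proof -
  assume "B \<in> sets M"
  then have "B \<in> sigma_sets (seq_space l) (cyl l ` words l)" by (simp add: sets_M)
  then show ?thesis
  proof induct
    case (Basic a)
    then obtain v where v: "v \<in> words l" "a = cyl l v" by auto
    have "preim l k a = (\<Union>u\<in>{u \<in> words l. length u = k}. cyl l u \<inter> preim l k a)"
      using seq_space_UN_cyl[of l k] preim_subset[of l k a] by blast
    also have "\<dots> = (\<Union>u\<in>{u \<in> words l. length u = k}. cyl l (u @ v))"
      using v cyl_preim_append by (intro SUP_cong) auto
    also have "\<dots> \<in> sets M"
      using v finite_words_length
      by (intro sets.finite_UN) (auto intro!: cyl_in_sets simp: words_def)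
    finally show ?case .
  next
    case Empty then show ?case by (simp add: preim_empty)
  next
    case (Compl a) then show ?case using preim_diff[of l k a] seq_space_in_sets by auto
  next
    case (Union a) then show ?case using preim_UN[of l k a UNIV] by auto
  qed
qed

text \<open>Dynkin-system induction over the measurable sets: the cylinders (with \<open>{}\<close>)
  form an intersection-stable generator of the \<open>\<sigma>\<close>-algebra.\<close>
lemma sets_induct_disjoint[consumes 1, case_names cyl empty compl union]:
  assumes "B \<in> sets M"
    and cyl: "\<And>v. v \<in> words l \<Longrightarrow> R (cyl l v)" and empty: "R {}"
    and compl: "\<And>A. A \<in> sets M \<Longrightarrow> R A \<Longrightarrow> R (seq_space l - A)"
    and union: "\<And>A. disjoint_family A \<Longrightarrow> range A \<subseteq> sets M \<Longrightarrow> (\<And>i. R (A i)) \<Longrightarrow> R (\<Union>i::nat. A i)"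
  shows "R B"
proof -
  define G where "G = insert {} (cyl l ` words l)"
  have stable: "Int_stable G" unfolding Int_stable_def G_def using cyl_Int by fastforce
  have G_Pow: "G \<subseteq> Pow (seq_space l)" unfolding G_def using cyl_subset by auto
  have sets_G: "sets M = sigma_sets (seq_space l) G"
    unfolding sets_M G_def
    by (rule sigma_sets_eqI) (auto intro: sigma_sets.Basic sigma_sets.Empty)
  have "B \<in> sigma_sets (seq_space l) G" using assms(1) sets_G by simp
  with stable G_Pow show ?thesis
  proof (induction rule: sigma_sets_induct_disjoint)
    case (basic A) then show ?case using cyl empty unfolding G_def by auto
  next
    case empty then show ?case by (rule assms(3))
  next
    case (compl A) then show ?case using assms(4) sets_G by simp
  next
    case (union A) then show ?case using assms(5) sets_G by simp
  qed
qed

section \<open>Shift invariance and Markov independence\<close>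

text \<open>Stationarity of \<open>p\<close>: a cylinder and its shift preimage have the same measure.\<close>
lemma measure_preim_1_cyl:
  assumes v: "v \<in> words l"
  shows "measure M (preim l 1 (cyl l v)) = measure M (cyl l v)"
proof (cases v)
  case Nil then show ?thesis by (simp add: cyl_Nil preim_seq_space)
next
  case (Cons c v')
  have c: "c \<le> l" using v Cons by (auto simp: words_def)
  have "preim l 1 (cyl l v) = (\<Union>b\<in>{..l}. cyl l [b] \<inter> preim l 1 (cyl l v))"
    using seq_space_UN_letter[of l] preim_subset[of l 1 "cyl l v"] by blast
  also have "\<dots> = (\<Union>b\<in>{..l}. cyl l (b # v))"
    using cyl_preim_append[of l "[_]" v] by simp
  finally have "measure M (preim l 1 (cyl l v)) = measure M (\<Union>b\<in>{..l}. cyl l (b # v))"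
    by simp
  also have "\<dots> = (\<Sum>b\<in>{..l}. measure M (cyl l (b # v)))"
  proof (rule finite_measure_finite_Union)
    show "(\<lambda>b. cyl l (b # v)) ` {..l} \<subseteq> sets M"
      using v by (auto intro!: cyl_in_sets simp: words_def)
    show "disjoint_family_on (\<lambda>b. cyl l (b # v)) {..l}"
      by (auto simp: disjoint_family_on_def cyl_def)
  qed simp
  also have "\<dots> = (\<Sum>b\<in>{..l}. p b * q b c) * qprod q c v'"
    using v Cons
    by (auto simp: sum_distrib_right measure_cyl words_def weight_Cons intro!: sum.cong)
  also have "\<dots> = measure M (cyl l v)"
    using v Cons p_stationary[OF c] by (simp add: measure_cyl weight_Cons)
  finally show ?thesis .
qed

lemma measure_preim_1: "B \<in> sets M \<Longrightarrow> measure M (preim l 1 B) = measure M B"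
proof (induction rule: sets_induct_disjoint)
  case (cyl v) then show ?case by (rule measure_preim_1_cyl)
next
  case empty then show ?case by (simp add: preim_empty)
next
  case (compl A)
  have "measure M (preim l 1 (seq_space l - A)) = measure M (seq_space l - preim l 1 A)"
    by (simp add: preim_diff)
  also have "\<dots> = measure M (seq_space l) - measure M (preim l 1 A)"
    by (rule finite_measure_Diff) (auto simp: seq_space_in_sets preim_in_sets compl preim_subset)
  also have "\<dots> = measure M (seq_space l - A)"
    using compl sets.sets_into_space[OF compl(1)] space_M
    by (subst finite_measure_Diff) (auto simp: seq_space_in_sets)
  finally show ?case .
next
  case (union A)
  have "(\<lambda>i. measure M (preim l 1 (A i))) sums measure M (\<Union>i. preim l 1 (A i))"
  proof (intro finite_measure_UNION)
    show "range (\<lambda>i. preim l 1 (A i)) \<subseteq> sets M" using union(2) by (auto intro!: preim_in_sets)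
    show "disjoint_family (\<lambda>i. preim l 1 (A i))"
      using union(1) by (auto simp: disjoint_family_on_def preim_def)
  qed
  then have "(\<lambda>i. measure M (A i)) sums measure M (preim l 1 (\<Union>i. A i))"
    using union preim_UN[of l 1 A UNIV] by simp
  moreover have "(\<lambda>i. measure M (A i)) sums measure M (\<Union>i. A i)"
    using union by (intro finite_measure_UNION) auto
  ultimately show ?case using sums_unique2 by blast
qed

lemma measure_preim: "B \<in> sets M \<Longrightarrow> measure M (preim l k B) = measure M B"
proof (induction k)
  case 0 then show ?case
    using sets.sets_into_space[of B M] by (simp add: preim_0 space_M Int_absorb1)
next
  case (Suc k)
  have "measure M (preim l (Suc k) B) = measure M (preim l 1 (preim l k B))"
    using preim_preim[of l 1 k B] by simp
  also have "\<dots> = measure M (preim l k B)" using measure_preim_1[OF preim_in_sets[OF Suc.prems]] by simp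
  finally show ?case using Suc by simp
qed

lemma AE_eq_preim:
  assumes A: "A \<in> sets M" and B: "B \<in> sets M" and ae: "AE x in M. (x \<in> A) = (x \<in> B)"
  shows "AE x in M. (x \<in> preim l k A) = (x \<in> preim l k B)"
proof -
  let ?N = "(A - B) \<union> (B - A)"
  have N: "?N \<in> sets M" using A B by auto
  have "AE x in M. x \<notin> ?N" using ae by eventually_elim auto
  then have "measure M ?N = 0" by (rule AE_not_in_iff_measure_0[OF N, THEN iffD1])
  then have "measure M (preim l k ?N) = 0" using N by (simp add: measure_preim)
  then have "AE x in M. x \<notin> preim l k ?N"
    using N by (simp add: preim_in_sets AE_not_in_iff_measure_0)
  then show ?thesis by eventually_elim (auto simp: preim_def)
qed

lemma measure_Int_UN_sums:
  assumes C: "C \<in> sets M" and A: "disjoint_family A" "range A \<subseteq> sets M"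
  shows "(\<lambda>i. measure M (C \<inter> A i)) sums measure M (C \<inter> (\<Union>i. A i))"
proof -
  have "(\<lambda>i. measure M (C \<inter> A i)) sums measure M (\<Union>i. C \<inter> A i)"
    using assms by (intro finite_measure_UNION) (auto simp: disjoint_family_on_def)
  moreover have "(\<Union>i. C \<inter> A i) = C \<inter> (\<Union>i. A i)" by auto
  ultimately show ?thesis by simp
qed

text \<open>The Markov independence identity for a cylinder \<open>B = C\<^sub>v\<close>: both sides equal the
  weight of \<open>u b v'\<close> times \<open>p\<^sub>b\<close> if \<open>v = b v'\<close>, and vanish if \<open>v\<close> starts differently.\<close>
lemma markov_independence_cyl:
  assumes u: "u @ [b] \<in> words l" and v: "v \<in> words l"
  shows "measure M (cyl l (u @ [b]) \<inter> preim l (length u) (cyl l v)) * p b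
       = measure M (cyl l (u @ [b])) * measure M (cyl l [b] \<inter> cyl l v)"
proof -
  have b: "b \<le> l" using u by (auto simp: words_def)
  have ub_split: "cyl l (u @ [b]) \<inter> preim l (length u) (cyl l v)
      = cyl l u \<inter> preim l (length u) (cyl l [b] \<inter> cyl l v)"
    using cyl_preim_append[of l u "[b]"] by (auto simp flip: preim_Int)
  show ?thesis
  proof (cases v)
    case Nil
    then show ?thesis using b
      by (simp add: cyl_Nil preim_seq_space Int_absorb2 cyl_subset measure_letter)
  next
    case (Cons c v')
    show ?thesis
    proof (cases "c = b")
      case True
      have e1: "cyl l (u @ [b]) \<inter> preim l (length u) (cyl l v) = cyl l (u @ b # v')"
        using ub_split True Cons cyl_single_Int_Cons cyl_preim_append by simp
      have e2: "cyl l [b] \<inter> cyl l v = cyl l (b # v')" using True Cons cyl_single_Int_Cons by simp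
      have "u @ b # v' \<in> words l" "b # v' \<in> words l" using u v Cons True by (auto simp: words_def)
      then show ?thesis using u
        by (simp add: e1 e2 measure_cyl weight_Cons weight_snoc_append[of q p u b v'])
    next
      case False
      then have "cyl l [b] \<inter> cyl l v = {}" using Cons cyl_single_Int_Cons[of l b c v'] by simp
      then show ?thesis using ub_split by (simp add: preim_empty)
    qed
  qed
qed

text \<open>Markov independence: given that the letter at position \<open>|u|\<close> is \<open>b\<close>, the past
  \<open>u\<close> and the future are independent.\<close>
lemma markov_independence:
  assumes u: "u @ [b] \<in> words l" and B: "B \<in> sets M"
  shows "measure M (cyl l (u @ [b]) \<inter> preim l (length u) B) * p b
       = measure M (cyl l (u @ [b])) * measure M (cyl l [b] \<inter> B)"
  using B
proof (induction rule: sets_induct_disjoint)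
  case (cyl v) then show ?case by (rule markov_independence_cyl[OF u])
next
  case empty then show ?case by (simp add: preim_empty)
next
  case (compl A)
  let ?k = "length u" and ?C = "cyl l (u @ [b])"
  have b: "b \<le> l" using u by (auto simp: words_def)
  have "?C \<inter> preim l ?k (seq_space l - A) = ?C - ?C \<inter> preim l ?k A"
    using cyl_subset[of l "u @ [b]"] by (auto simp: preim_diff)
  then have m1: "measure M (?C \<inter> preim l ?k (seq_space l - A)) = measure M ?C - measure M (?C \<inter> preim l ?k A)"
    using compl u by (simp add: finite_measure_Diff cyl_in_sets preim_in_sets sets.Int)
  have "cyl l [b] \<inter> (seq_space l - A) = cyl l [b] - cyl l [b] \<inter> A"
    using cyl_subset[of l "[b]"] by auto
  then have m2: "measure M (cyl l [b] \<inter> (seq_space l - A)) = p b - measure M (cyl l [b] \<inter> A)"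
    using compl b by (simp add: finite_measure_Diff cyl_in_sets letter_word sets.Int measure_letter)
  show ?case unfolding m1 m2 left_diff_distrib right_diff_distrib compl.IH by simp
next
  case (union A)
  let ?k = "length u" and ?C = "cyl l (u @ [b])"
  have C: "?C \<in> sets M" "cyl l [b] \<in> sets M" using u by (auto intro!: cyl_in_sets simp: words_def)
  have "disjoint_family (\<lambda>i. preim l ?k (A i))"
    using union(1) by (auto simp: disjoint_family_on_def preim_def)
  moreover have "range (\<lambda>i. preim l ?k (A i)) \<subseteq> sets M" using union(2) by (auto intro!: preim_in_sets)
  ultimately have "(\<lambda>i. measure M (?C \<inter> preim l ?k (A i))) sums measure M (?C \<inter> (\<Union>i. preim l ?k (A i)))"
    by (rule measure_Int_UN_sums[OF C(1)])
  then have lhs: "(\<lambda>i. measure M (?C \<inter> preim l ?k (A i)) * p b) sums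
      (measure M (?C \<inter> preim l ?k (\<Union>i. A i)) * p b)"
    using preim_UN[of l ?k A UNIV] by (simp add: sums_mult2)
  have "(\<lambda>i. measure M (cyl l [b] \<inter> A i)) sums measure M (cyl l [b] \<inter> (\<Union>i. A i))"
    using union(1,2) by (rule measure_Int_UN_sums[OF C(2)])
  then have rhs: "(\<lambda>i. measure M ?C * measure M (cyl l [b] \<inter> A i)) sums
      (measure M ?C * measure M (cyl l [b] \<inter> (\<Union>i. A i)))"
    by (rule sums_mult)
  have "(\<lambda>i. measure M (?C \<inter> preim l ?k (A i)) * p b) = (\<lambda>i. measure M ?C * measure M (cyl l [b] \<inter> A i))"
    using union.IH by (intro ext) blast
  then show ?case using lhs rhs sums_unique2 by metis
qed

lemma measure_cyl_preim_letter_block: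
  assumes w: "w \<in> words l" and b: "b \<le> l" and Y: "Y \<in> sets M"
    and Y_b: "AE x in M. x \<in> Y \<longrightarrow> x \<in> cyl l [b]"
  shows "measure M (cyl l w \<inter> preim l (length w) Y) * p b = measure M (cyl l (w @ [b])) * measure M Y"
proof -
  have Cb: "cyl l [b] \<in> sets M" using b by (simp add: cyl_in_sets letter_word)
  have wb: "w @ [b] \<in> words l" using w b by (simp add: words_def)
  have Y_eq: "AE x in M. (x \<in> Y) = (x \<in> cyl l [b] \<inter> Y)" using Y_b by eventually_elim auto
  have "AE x in M. (x \<in> preim l (length w) Y) = (x \<in> preim l (length w) (cyl l [b] \<inter> Y))"
    by (rule AE_eq_preim[OF Y _ Y_eq]) (use Cb Y in auto)
  moreover have "cyl l w \<inter> preim l (length w) (cyl l [b] \<inter> Y) = cyl l (w @ [b]) \<inter> preim l (length w) Y"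
    using cyl_preim_append[of l w "[b]"] preim_Int[of l "length w" "cyl l [b]" Y] by blast
  ultimately have "measure M (cyl l w \<inter> preim l (length w) Y) = measure M (cyl l (w @ [b]) \<inter> preim l (length w) Y)"
    by (intro measure_eq_AE) (auto intro!: sets.Int cyl_in_sets preim_in_sets w wb Y)
  also have "\<dots> * p b = measure M (cyl l (w @ [b])) * measure M (cyl l [b] \<inter> Y)"
    using markov_independence[OF wb Y] by simp
  also have "measure M (cyl l [b] \<inter> Y) = measure M Y"
    by (rule measure_eq_AE) (use Y_eq Cb Y in auto)
  finally show ?thesis .
qed

lemma conditional_ratio:
  assumes w: "w \<in> words l" and b: "b \<le> l" and Y: "Y \<in> sets M" and Z: "Z \<in> sets M"
    and ZY: "Z \<subseteq> Y" and Y_b: "AE x in M. x \<in> Y \<longrightarrow> x \<in> cyl l [b]"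
    and pos: "0 < measure M (cyl l w \<inter> preim l (length w) Y)"
  shows "measure M (cyl l w \<inter> preim l (length w) Z) / measure M (cyl l w \<inter> preim l (length w) Y)
       = measure M Z / measure M Y"
proof -
  define c where "c = measure M (cyl l (w @ [b]))"
  have Z_b: "AE x in M. x \<in> Z \<longrightarrow> x \<in> cyl l [b]" using Y_b by eventually_elim (use ZY in auto)
  have pb: "0 < p b" using p_pos[OF b] .
  have eY: "measure M (cyl l w \<inter> preim l (length w) Y) = c * measure M Y / p b"
    using measure_cyl_preim_letter_block[OF w b Y Y_b] pb unfolding c_def by (simp add: field_simps)
  have eZ: "measure M (cyl l w \<inter> preim l (length w) Z) = c * measure M Z / p b"
    using measure_cyl_preim_letter_block[OF w b Z Z_b] pb unfolding c_def by (simp add: field_simps)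
  have "c \<noteq> 0" "measure M Y \<noteq> 0" using pos unfolding eY by auto
  then show ?thesis unfolding eY eZ using pb by (simp add: field_simps)
qed

end

section \<open>Partitions satisfying the almost-everywhere conditions\<close>

lemma cyl_partition_Suc:
  "cyl_partition l P idx (Suc m) = cyl_partition l P idx m \<inter> preim l m (P (idx m))"
  by (auto simp: cyl_partition_def lessThan_Suc)

definition partition_sigma :: "nat \<Rightarrow> (nat \<Rightarrow> (nat \<Rightarrow> nat) set) \<Rightarrow> nat \<Rightarrow> (nat \<Rightarrow> nat) set set" where
  "partition_sigma l P n = sigma_sets (seq_space l) {preim l k (P i) | k i. i \<le> n}"

lemma sigma_algebra_partition_sigma: "sigma_algebra (seq_space l) (partition_sigma l P n)"
  unfolding partition_sigma_def by (rule sigma_algebra_sigma_sets) (use preim_subset in auto)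

lemma preim_in_partition_sigma: "i \<le> n \<Longrightarrow> preim l k (P i) \<in> partition_sigma l P n"
  unfolding partition_sigma_def by (blast intro: sigma_sets.Basic)

context markov_measure
begin

lemma cyl_partition_in_sets:
  assumes "\<And>j. j \<le> m \<Longrightarrow> P (idx j) \<in> sets M"
  shows "cyl_partition l P idx (Suc m) \<in> sets M"
  using assms
proof (induction m)
  case 0 then show ?case by (simp add: cyl_partition_def lessThan_Suc preim_in_sets)
next
  case (Suc m) then show ?case by (subst cyl_partition_Suc) (auto intro!: sets.Int preim_in_sets)
qed

lemma ae_cyl_extend:
  assumes S: "S \<in> sets M" and T: "T \<in> sets M" and w: "w \<in> words l"
    and X_w: "AE x in M. (x \<in> X) = (x \<in> cyl l w \<inter> preim l (length w) S)"
    and transition: "(\<exists>a\<le>l. AE x in M. (x \<in> S \<inter> preim l 1 T) = (x \<in> cyl l [a] \<inter> preim l 1 T))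
      \<or> (AE x in M. x \<notin> S \<inter> preim l 1 T)"
  shows "(AE x in M. x \<notin> X \<inter> preim l (Suc (length w)) T) \<or>
    (\<exists>a\<le>l. AE x in M. (x \<in> X \<inter> preim l (Suc (length w)) T)
                     = (x \<in> cyl l (w @ [a]) \<inter> preim l (Suc (length w)) T))"
proof -
  let ?k = "length w" and ?Z = "S \<inter> preim l 1 T" and ?X' = "X \<inter> preim l (Suc (length w)) T"
  have Z_sets: "?Z \<in> sets M" using S T by (auto intro!: sets.Int preim_in_sets)
  have "preim l ?k ?Z = preim l ?k S \<inter> preim l (Suc ?k) T"
    using preim_Int[of l ?k S "preim l 1 T"] preim_preim[of l ?k 1 T] by simp
  then have X'_w: "AE x in M. (x \<in> ?X') = (x \<in> cyl l w \<inter> preim l ?k ?Z)"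
    using X_w by (auto elim!: AE_mp)
  from transition show ?thesis
  proof (elim disjE exE conjE)
    fix a assume a: "a \<le> l" and Z_a: "AE x in M. (x \<in> ?Z) = (x \<in> cyl l [a] \<inter> preim l 1 T)"
    have "cyl l [a] \<inter> preim l 1 T \<in> sets M"
      using a T by (auto intro!: sets.Int preim_in_sets cyl_in_sets simp: letter_word)
    then have "AE x in M. (x \<in> preim l ?k ?Z) = (x \<in> preim l ?k (cyl l [a] \<inter> preim l 1 T))"
      by (rule AE_eq_preim[OF Z_sets _ Z_a])
    moreover have "cyl l w \<inter> preim l ?k (cyl l [a] \<inter> preim l 1 T) = cyl l (w @ [a]) \<inter> preim l (Suc ?k) T"
      using cyl_preim_append[of l w "[a]"]
        preim_Int[of l ?k "cyl l [a]" "preim l 1 T"] preim_preim[of l ?k 1 T] by auto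
    ultimately have "AE x in M. (x \<in> ?X') = (x \<in> cyl l (w @ [a]) \<inter> preim l (Suc ?k) T)"
      using X'_w by (auto elim!: AE_mp)
    then show ?thesis using a by blast
  next
    assume "AE x in M. x \<notin> ?Z"
    then have "AE x in M. (x \<in> preim l ?k ?Z) = (x \<in> preim l ?k {})"
      by (intro AE_eq_preim[OF Z_sets]) auto
    then have "AE x in M. x \<notin> ?X'"
      using X'_w by eventually_elim (auto simp: preim_empty)
    then show ?thesis by blast
  qed
qed

lemma cyl_partition_ae_cyl:
  assumes P_sets: "\<And>i. i \<le> n \<Longrightarrow> P i \<in> sets M"
    and P_transition: "\<And>i j. i \<le> n \<Longrightarrow> j \<le> n \<Longrightarrow>
      (\<exists>a\<le>l. AE x in M. (x \<in> P i \<inter> preim l 1 (P j)) = (x \<in> cyl l [a] \<inter> preim l 1 (P j)))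
      \<or> (AE x in M. x \<notin> P i \<inter> preim l 1 (P j))"
    and idx: "\<And>j. j \<le> k \<Longrightarrow> idx j \<le> n"
  shows "(AE x in M. x \<notin> cyl_partition l P idx (Suc k)) \<or>
    (\<exists>w\<in>words l. length w = k \<and>
      (AE x in M. (x \<in> cyl_partition l P idx (Suc k)) = (x \<in> cyl l w \<inter> preim l k (P (idx k)))))"
  using idx
proof (induction k)
  case 0
  show ?case
    by (intro disjI2 bexI[of _ "[]"]) (auto simp: cyl_partition_def cyl_Nil preim_0 words_def)
next
  case (Suc k)
  let ?X = "cyl_partition l P idx (Suc k)" and ?Pj = "P (idx (Suc k))"
  have ij: "idx k \<le> n" "idx (Suc k) \<le> n" using Suc.prems by auto
  have "(AE x in M. x \<notin> ?X) \<or>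
    (\<exists>w\<in>words l. length w = k \<and> (AE x in M. (x \<in> ?X) = (x \<in> cyl l w \<inter> preim l k (P (idx k)))))"
    using Suc by simp
  moreover have X'_eq: "cyl_partition l P idx (Suc (Suc k)) = ?X \<inter> preim l (Suc k) ?Pj"
    by (rule cyl_partition_Suc)
  ultimately show ?case
  proof (elim disjE bexE conjE)
    assume "AE x in M. x \<notin> ?X"
    then have "AE x in M. x \<notin> ?X \<inter> preim l (Suc k) ?Pj" by eventually_elim auto
    then show ?thesis unfolding X'_eq by blast
  next
    fix w assume w: "w \<in> words l" "length w = k"
      and X_w: "AE x in M. (x \<in> ?X) = (x \<in> cyl l w \<inter> preim l k (P (idx k)))"
    have "(AE x in M. x \<notin> ?X \<inter> preim l (Suc k) ?Pj) \<or>
      (\<exists>a\<le>l. AE x in M. (x \<in> ?X \<inter> preim l (Suc k) ?Pj) = (x \<in> cyl l (w @ [a]) \<inter> preim l (Suc k) ?Pj))"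
      using ae_cyl_extend[OF P_sets[OF ij(1)] P_sets[OF ij(2)] w(1) _ P_transition[OF ij], of ?X]
        X_w w(2) by simp
    moreover have "w @ [a] \<in> words l \<and> length (w @ [a]) = Suc k" if "a \<le> l" for a
      using w that by (simp add: words_def)
    ultimately show ?thesis unfolding X'_eq by blast
  qed
qed

text \<open>Markov property from the almost-everywhere conditions: by the atom description,
  each ratio in the definition is a ratio of the form treated in \<open>conditional_ratio\<close>.\<close>
lemma markov_property_ae:
  assumes P_sets: "\<And>i. i \<le> n \<Longrightarrow> P i \<in> sets M"
    and P_letter: "\<And>i. i \<le> n \<Longrightarrow> \<exists>b\<le>l. AE x in M. x \<in> P i \<longrightarrow> x \<in> cyl l [b]"
    and P_transition: "\<And>i j. i \<le> n \<Longrightarrow> j \<le> n \<Longrightarrow>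
      (\<exists>a\<le>l. AE x in M. (x \<in> P i \<inter> preim l 1 (P j)) = (x \<in> cyl l [a] \<inter> preim l 1 (P j)))
      \<or> (AE x in M. x \<notin> P i \<inter> preim l 1 (P j))"
  shows "markov_property l M P n"
  unfolding markov_property_def
proof (intro allI impI)
  fix m idx assume m: "1 \<le> m" and idx: "\<forall>j\<le>m. idx j \<le> n"
    and pos: "0 < measure M (cyl_partition l P idx m)"
  obtain k where mk: "m = Suc k" using m by (cases m) auto
  let ?X = "cyl_partition l P idx (Suc k)" and ?X' = "cyl_partition l P idx (Suc (Suc k))"
  let ?Y = "P (idx k)" and ?Z = "P (idx k) \<inter> preim l 1 (P (idx (Suc k)))"
  have ij: "idx k \<le> n" "idx (Suc k) \<le> n" using idx mk by auto
  have X_sets: "?X \<in> sets M" "?X' \<in> sets M"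
    using idx mk by (auto intro!: cyl_partition_in_sets P_sets)
  have Y_sets: "?Y \<in> sets M" and Z_sets: "?Z \<in> sets M"
    using P_sets ij by (auto intro!: sets.Int preim_in_sets)
  have "(AE x in M. x \<notin> ?X) \<or>
    (\<exists>w\<in>words l. length w = k \<and> (AE x in M. (x \<in> ?X) = (x \<in> cyl l w \<inter> preim l k ?Y)))"
    by (rule cyl_partition_ae_cyl[of n P]) (use P_sets P_transition idx mk in auto)
  moreover have "\<not> (AE x in M. x \<notin> ?X)" using pos mk X_sets by (simp add: AE_not_in_iff_measure_0)
  ultimately obtain w where w: "w \<in> words l" "length w = k"
    and X_w: "AE x in M. (x \<in> ?X) = (x \<in> cyl l w \<inter> preim l k ?Y)"
    by blast
  have preim_Z: "preim l k ?Z = preim l k ?Y \<inter> preim l (Suc k) (P (idx (Suc k)))"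
    using preim_Int[of l k ?Y "preim l 1 (P (idx (Suc k)))"] preim_preim[of l k 1 "P (idx (Suc k))"]
    by simp
  have X'_w: "AE x in M. (x \<in> ?X') = (x \<in> cyl l w \<inter> preim l k ?Z)"
    using X_w unfolding cyl_partition_Suc[of l P idx "Suc k"] preim_Z by eventually_elim auto
  have "measure M ?X = measure M (cyl l w \<inter> preim l k ?Y)"
    by (rule measure_eq_AE[OF X_w]) (use X_sets w Y_sets in \<open>auto intro!: sets.Int preim_in_sets cyl_in_sets\<close>)
  moreover have "measure M ?X' = measure M (cyl l w \<inter> preim l k ?Z)"
    by (rule measure_eq_AE[OF X'_w]) (use X_sets w Z_sets in \<open>auto intro!: sets.Int preim_in_sets cyl_in_sets\<close>)
  moreover obtain b where b: "b \<le> l" and Y_b: "AE x in M. x \<in> ?Y \<longrightarrow> x \<in> cyl l [b]"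
    using P_letter[OF ij(1)] by blast
  ultimately have "measure M ?X' / measure M ?X = measure M ?Z / measure M ?Y"
    using conditional_ratio[OF w(1) b Y_sets Z_sets _ Y_b] pos mk w(2) by auto
  then show "measure M (cyl_partition l P idx (Suc m)) / measure M (cyl_partition l P idx m)
      = measure M (P (idx (m - 1)) \<inter> preim l 1 (P (idx m))) / measure M (P (idx (m - 1)))"
    using mk by simp
qed

lemma partition_sigma_subset_sets:
  assumes "\<And>i. i \<le> n \<Longrightarrow> P i \<in> sets M"
  shows "partition_sigma l P n \<subseteq> sets M"
  unfolding partition_sigma_def
  using sets.sigma_sets_subset[of "{preim l k (P i) | k i. i \<le> n}" M] assms
  by (auto simp: space_M intro: preim_in_sets)

text \<open>If the partition elements lie a.e. in letter cylinders, then each letter cylinder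
  is a.e. equal to a union of partition elements, whose shifts lie in the partition \<open>\<sigma>\<close>-algebra.\<close>
lemma letter_ae_partition_sigma:
  assumes P_sets: "\<And>i. i \<le> n \<Longrightarrow> P i \<in> sets M"
    and P_letter: "\<And>i. i \<le> n \<Longrightarrow> \<exists>b\<le>l. AE x in M. x \<in> P i \<longrightarrow> x \<in> cyl l [b]"
    and P_cover: "(\<Union>i\<le>n. P i) = seq_space l"
  shows "\<exists>A\<in>sets M. (\<forall>j. preim l j A \<in> partition_sigma l P n) \<and> (AE x in M. (x \<in> A) = (x \<in> cyl l [a]))"
proof -
  interpret G: sigma_algebra "seq_space l" "partition_sigma l P n"
    by (rule sigma_algebra_partition_sigma)
  have "\<forall>i. \<exists>b. i \<le> n \<longrightarrow> (AE x in M. x \<in> P i \<longrightarrow> x \<in> cyl l [b])" using P_letter by blast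
  then obtain bb where bb: "\<And>i. i \<le> n \<Longrightarrow> AE x in M. x \<in> P i \<longrightarrow> x \<in> cyl l [bb i]"
    by (metis choice)
  define I where "I = {i. i \<le> n \<and> bb i = a}"
  have I: "finite I" "I \<subseteq> {..n}" unfolding I_def by (auto intro: finite_subset[of _ "{..n}"])
  have "(\<Union>i\<in>I. P i) \<in> sets M" using I P_sets by (intro sets.finite_UN) auto
  moreover have "preim l j (\<Union>i\<in>I. P i) \<in> partition_sigma l P n" for j
    unfolding preim_UN using I by (intro G.finite_UN) (auto intro: preim_in_partition_sigma)
  moreover have "AE x in M. (x \<in> (\<Union>i\<in>I. P i)) = (x \<in> cyl l [a])"
  proof -
    have "AE x in M. \<forall>i\<in>{..n}. x \<in> P i \<longrightarrow> x \<in> cyl l [bb i]" by (rule AE_finite_allI) (use bb in auto)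
    then show ?thesis
    proof eventually_elim
      case (elim x)
      show ?case
      proof
        assume "x \<in> (\<Union>i\<in>I. P i)" then show "x \<in> cyl l [a]" using elim unfolding I_def by auto
      next
        assume xa: "x \<in> cyl l [a]"
        then obtain i where i: "i \<le> n" "x \<in> P i" using P_cover cyl_subset by blast
        then have "x \<in> cyl l [bb i]" using elim by auto
        with xa have "bb i = a" by (auto simp: cyl_def)
        then show "x \<in> (\<Union>i\<in>I. P i)" using i unfolding I_def by blast
      qed
    qed
  qed
  ultimately show ?thesis by blast
qed

lemma cyl_ae_partition_sigma:
  assumes P_sets: "\<And>i. i \<le> n \<Longrightarrow> P i \<in> sets M"
    and P_letter: "\<And>i. i \<le> n \<Longrightarrow> \<exists>b\<le>l. AE x in M. x \<in> P i \<longrightarrow> x \<in> cyl l [b]"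
    and P_cover: "(\<Union>i\<le>n. P i) = seq_space l"
    and w: "w \<in> words l"
  shows "\<exists>A'\<in>partition_sigma l P n. AE x in M. (x \<in> A') = (x \<in> cyl l w)"
proof -
  interpret G: sigma_algebra "seq_space l" "partition_sigma l P n"
    by (rule sigma_algebra_partition_sigma)
  show ?thesis
  proof (cases "w = []")
    case True then show ?thesis by (intro bexI[of _ "seq_space l"]) (auto simp: cyl_Nil)
  next
    case False
    have "\<forall>a. \<exists>A. A \<in> sets M \<and> (\<forall>j. preim l j A \<in> partition_sigma l P n)
        \<and> (AE x in M. (x \<in> A) = (x \<in> cyl l [a]))"
      using letter_ae_partition_sigma[of n P, OF P_sets P_letter P_cover] by blast
    then obtain A where A: "\<And>a. A a \<in> sets M" "\<And>a j. preim l j (A a) \<in> partition_sigma l P n"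
      and A_ae: "\<And>a. AE x in M. (x \<in> A a) = (x \<in> cyl l [a])"
      by (metis choice)
    have "AE x in M. \<forall>j\<in>{..<length w}. (x \<in> preim l j (A (w ! j))) = (x \<in> preim l j (cyl l [w ! j]))"
    proof (rule AE_finite_allI)
      fix j assume "j \<in> {..<length w}"
      then have "cyl l [w ! j] \<in> sets M" using w by (auto intro!: cyl_in_sets simp: words_def)
      then show "AE x in M. (x \<in> preim l j (A (w ! j))) = (x \<in> preim l j (cyl l [w ! j]))"
        by (intro AE_eq_preim A A_ae)
    qed simp
    then have "AE x in M. (x \<in> (\<Inter>j<length w. preim l j (A (w ! j)))) = (x \<in> cyl l w)"
      unfolding cyl_eq_INT_preim[OF False] by eventually_elim auto
    moreover have "(\<Inter>j<length w. preim l j (A (w ! j))) \<in> partition_sigma l P n"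
      by (rule G.finite_INT) (use False A in auto)
    ultimately show ?thesis by blast
  qed
qed

lemma sets_ae_sigma_algebra:
  assumes G: "sigma_algebra (seq_space l) G"
    and cyl_approx: "\<And>w. w \<in> words l \<Longrightarrow> \<exists>A'\<in>G. AE x in M. (x \<in> A') = (x \<in> cyl l w)"
    and B: "B \<in> sets M"
  shows "\<exists>A'\<in>G. AE x in M. (x \<in> A') = (x \<in> B)"
proof -
  interpret G: sigma_algebra "seq_space l" G by (rule G)
  from B have "B \<in> sigma_sets (seq_space l) (cyl l ` words l)" by (simp add: sets_M)
  then show ?thesis
  proof induct
    case (Basic a) then show ?case using cyl_approx by auto
  next
    case Empty then show ?case by (intro bexI[of _ "{}"]) auto
  next
    case (Compl a)
    then obtain A' where A': "A' \<in> G" "AE x in M. (x \<in> A') = (x \<in> a)" by blast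
    have "AE x in M. (x \<in> seq_space l - A') = (x \<in> seq_space l - a)"
      using A'(2) AE_space by eventually_elim (auto simp: space_M)
    moreover have "seq_space l - A' \<in> G" using A'(1) by auto
    ultimately show ?case by blast
  next
    case (Union a)
    then obtain f where f: "\<And>i. f i \<in> G" "\<And>i. AE x in M. (x \<in> f i) = (x \<in> a i)" by metis
    have "AE x in M. \<forall>i. (x \<in> f i) = (x \<in> a i)" using f(2) by (simp add: AE_all_countable)
    then have "AE x in M. (x \<in> (\<Union>i. f i)) = (x \<in> (\<Union>i. a i))" by eventually_elim auto
    moreover have "(\<Union>i. f i) \<in> G" using f(1) by (intro G.countable_UN) auto
    ultimately show ?case by blast
  qed
qed

lemma generating_ae:
  assumes P_sets: "\<And>i. i \<le> n \<Longrightarrow> P i \<in> sets M"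
    and P_letter: "\<And>i. i \<le> n \<Longrightarrow> \<exists>b\<le>l. AE x in M. x \<in> P i \<longrightarrow> x \<in> cyl l [b]"
    and P_cover: "(\<Union>i\<le>n. P i) = seq_space l"
  shows "generating l M P n"
  unfolding generating_def partition_sigma_def[symmetric]
proof
  fix B assume B: "B \<in> sets M"
  obtain A' where A': "A' \<in> partition_sigma l P n" and A'_B: "AE x in M. (x \<in> A') = (x \<in> B)"
    using sets_ae_sigma_algebra[OF sigma_algebra_partition_sigma
        cyl_ae_partition_sigma[of n P, OF P_sets P_letter P_cover] B] by blast
  have "partition_sigma l P n \<subseteq> sets M" by (intro partition_sigma_subset_sets P_sets)
  with A' have A'_sets: "A' \<in> sets M" by blast
  have sym_diff: "(A' - B) \<union> (B - A') \<in> sets M" using A'_sets B by auto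
  have "AE x in M. x \<notin> (A' - B) \<union> (B - A')" using A'_B by eventually_elim auto
  then have "measure M ((A' - B) \<union> (B - A')) = 0" using AE_not_in_iff_measure_0[OF sym_diff] by blast
  then show "\<exists>A'\<in>partition_sigma l P n. measure M ((A' - B) \<union> (B - A')) = 0" using A' by blast
qed

lemma ae_letter_of_diff_null:
  assumes N: "N \<in> sets M" "measure M N = 0" and Q: "Q \<in> sets M"
    and cond: "(\<exists>a\<le>l. Q - N \<subseteq> cyl l [a]) \<or> measure M (Q - N) = 0"
  shows "\<exists>b\<le>l. AE x in M. x \<in> Q \<longrightarrow> x \<in> cyl l [b]"
proof -
  have N_ae: "AE x in M. x \<notin> N" using N by (simp add: AE_not_in_iff_measure_0)
  from cond show ?thesis
  proof (elim disjE exE conjE)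
    fix a assume a: "a \<le> l" and Q_a: "Q - N \<subseteq> cyl l [a]"
    have "AE x in M. x \<in> Q \<longrightarrow> x \<in> cyl l [a]" using N_ae by eventually_elim (use Q_a in auto)
    then show ?thesis using a by blast
  next
    assume "measure M (Q - N) = 0"
    moreover have "Q - N \<in> sets M" using Q N by auto
    ultimately have "AE x in M. x \<notin> Q - N" using AE_not_in_iff_measure_0 by blast
    then have "AE x in M. x \<in> Q \<longrightarrow> x \<in> cyl l [0]" using N_ae by eventually_elim auto
    then show ?thesis by blast
  qed
qed

text \<open>Removing a null set: condition (ii) for \<open>Q\<^sub>1 - N\<close>, \<open>Q\<^sub>2 - N\<close> gives the a.e. transition
  condition for \<open>Q\<^sub>1, Q\<^sub>2\<close>; the shifted null set \<open>\<sigma>\<^sup>-\<^sup>1 N\<close> is null by shift invariance.\<close>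
lemma ae_transition_of_diff_null:
  assumes N: "N \<in> sets M" "measure M N = 0" and Q: "Q1 \<in> sets M" "Q2 \<in> sets M"
    and cond: "(\<exists>a\<le>l. (Q1 - N) \<inter> preim l 1 (Q2 - N) = cyl l [a] \<inter> preim l 1 (Q2 - N))
      \<or> measure M ((Q1 - N) \<inter> preim l 1 (Q2 - N)) = 0"
  shows "(\<exists>a\<le>l. AE x in M. (x \<in> Q1 \<inter> preim l 1 Q2) = (x \<in> cyl l [a] \<inter> preim l 1 Q2))
    \<or> (AE x in M. x \<notin> Q1 \<inter> preim l 1 Q2)"
proof -
  have "AE x in M. x \<notin> N" using N by (simp add: AE_not_in_iff_measure_0)
  moreover have "AE x in M. x \<notin> preim l 1 N" using N by (simp add: AE_not_in_iff_measure_0 preim_in_sets measure_preim)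
  ultimately have good: "AE x in M. x \<notin> N \<and> x \<notin> preim l 1 N" by eventually_elim simp
  have preim_diff_N: "preim l 1 (Q2 - N) = preim l 1 Q2 - preim l 1 N" by (auto simp: preim_def)
  from cond show ?thesis
  proof (elim disjE exE conjE)
    fix a assume a: "a \<le> l" and eq: "(Q1 - N) \<inter> preim l 1 (Q2 - N) = cyl l [a] \<inter> preim l 1 (Q2 - N)"
    have pointwise: "(x \<in> Q1 \<inter> preim l 1 Q2) = (x \<in> cyl l [a] \<inter> preim l 1 Q2)"
      if "x \<notin> N \<and> x \<notin> preim l 1 N" for x
    proof -
      have "(x \<in> (Q1 - N) \<inter> preim l 1 (Q2 - N)) = (x \<in> cyl l [a] \<inter> preim l 1 (Q2 - N))"
        using eq by simp
      then show ?thesis using that unfolding preim_diff_N by blast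
    qed
    have "AE x in M. (x \<in> Q1 \<inter> preim l 1 Q2) = (x \<in> cyl l [a] \<inter> preim l 1 Q2)"
      using good by eventually_elim (rule pointwise)
    then show ?thesis using a by blast
  next
    assume "measure M ((Q1 - N) \<inter> preim l 1 (Q2 - N)) = 0"
    moreover have "(Q1 - N) \<inter> preim l 1 (Q2 - N) \<in> sets M"
      using N Q by (auto intro: preim_in_sets)
    ultimately have "AE x in M. x \<notin> (Q1 - N) \<inter> preim l 1 (Q2 - N)"
      using AE_not_in_iff_measure_0 by blast
    then have "AE x in M. x \<notin> Q1 \<inter> preim l 1 Q2"
      using good unfolding preim_diff_N by eventually_elim blast
    then show ?thesis by blast
  qed
qed

end

theorem corollary3:
  fixes l n :: nat and q :: "nat \<Rightarrow> nat \<Rightarrow> real" and p :: "nat \<Rightarrow> real"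
    and M :: "(nat \<Rightarrow> nat) measure"
    and P :: "nat \<Rightarrow> (nat \<Rightarrow> nat) set" and N0 :: "(nat \<Rightarrow> nat) set"
  assumes ms: "markov_shift l q p M"
    and P_meas: "\<forall>i\<le>n. P i \<in> sets M"
    and P_disj: "\<forall>i\<le>n. \<forall>j\<le>n. i \<noteq> j \<longrightarrow> P i \<inter> P j = {}"
    and P_cover: "(\<Union>i\<le>n. P i) = seq_space l"
    and O_meas: "N0 \<in> sets M" and O_null: "measure M N0 = 0"
    and O_inv: "preim l 1 N0 = N0"
    and cond_i: "\<forall>Q\<in>{P i - N0 | i. i \<le> n} \<union> {N0}.
        (\<exists>a\<le>l. Q \<subseteq> cyl l [a]) \<or> (preim l 1 Q = Q \<and> measure M Q = 0)"
    and cond_ii: "\<forall>Q1\<in>{P i - N0 | i. i \<le> n} \<union> {N0}. \<forall>Q2\<in>{P i - N0 | i. i \<le> n} \<union> {N0}.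
        (\<exists>a\<le>l. Q1 \<inter> preim l 1 Q2 = cyl l [a] \<inter> preim l 1 Q2) \<or>
        measure M (Q1 \<inter> preim l 1 Q2) = 0"
  shows "generating l M P n \<and> markov_property l M P n"
proof -
  interpret markov_measure l q p M by (rule markov_measure.intro) (rule ms)
  have P_sets: "\<And>i. i \<le> n \<Longrightarrow> P i \<in> sets M" using P_meas by auto
  have in_P_tilde: "P i - N0 \<in> {P i - N0 | i. i \<le> n} \<union> {N0}" if "i \<le> n" for i
    using that by blast
  have P_letter: "\<exists>b\<le>l. AE x in M. x \<in> P i \<longrightarrow> x \<in> cyl l [b]" if "i \<le> n" for i
  proof (rule ae_letter_of_diff_null[OF O_meas O_null P_sets[OF that]])
    show "(\<exists>a\<le>l. P i - N0 \<subseteq> cyl l [a]) \<or> measure M (P i - N0) = 0"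
      using cond_i in_P_tilde[OF that] by blast
  qed
  have P_transition: "(\<exists>a\<le>l. AE x in M. (x \<in> P i \<inter> preim l 1 (P j)) = (x \<in> cyl l [a] \<inter> preim l 1 (P j)))
      \<or> (AE x in M. x \<notin> P i \<inter> preim l 1 (P j))" if "i \<le> n" "j \<le> n" for i j
  proof (rule ae_transition_of_diff_null[OF O_meas O_null P_sets[OF that(1)] P_sets[OF that(2)]])
    show "(\<exists>a\<le>l. (P i - N0) \<inter> preim l 1 (P j - N0) = cyl l [a] \<inter> preim l 1 (P j - N0))
        \<or> measure M ((P i - N0) \<inter> preim l 1 (P j - N0)) = 0"
      using cond_ii in_P_tilde[OF that(1)] in_P_tilde[OF that(2)] by blast
  qed
  show ?thesis
    using generating_ae[of n P, OF P_sets P_letter P_cover]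
      markov_property_ae[of n P, OF P_sets P_letter P_transition]
    by blast
qed

end
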